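(* Let $k$ be a field, $X,Y,Z$ indeterminates, $M=(Y,Z)k((X))[[Y,Z]]$, and $R=k[[X]]+M$ (a subring of $T=k((X))[[Y,Z]]=k((X))+M$). Then every nonzero finitely generated ideal of $R$ is $v$-basic, but $R$ is not a $v$-domain; indeed $((Y,Z)(Y,Z)^{-1})_v=M\ne R$.
   Context: For a domain $R$ with quotient field $K$: $I^{-1}=(R:I)=\{x\in K:xI\subseteq R\}$, $I_v=(I^{-1})^{-1}$. $R$ is a $v$-domain if every nonzero finitely generated ideal $I$ satisfies $(II^{-1})_v=R$. For a nonzero ideal $I$, an ideal $J\subseteq I$ is a $v$-reduction of $I$ if $(JI^n)_v=(I^{n+1})_v$ for some integer $n\ge0$; $I$ is $v$-basic if every $v$-reduction $J$ of $I$ satisfies $J_v=I_v$. *)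

theory Defs
  imports "HOL-Computational_Algebra.Computational_Algebra"
begin

text \<open>General notions for a subring R of a field 'a (the ambient field plays
the role of the quotient field K of R). Ideals and fractional ideals are subsets of 'a.\<close>

definition is_ideal :: "'a::field set \<Rightarrow> 'a set \<Rightarrow> bool" where
  "is_ideal R I \<longleftrightarrow> I \<subseteq> R \<and> 0 \<in> I \<and> (\<forall>a\<in>I. \<forall>b\<in>I. a + b \<in> I)
      \<and> (\<forall>r\<in>R. \<forall>a\<in>I. r * a \<in> I)"

definition ideal_gen :: "'a::field set \<Rightarrow> 'a set \<Rightarrow> 'a set" where
  "ideal_gen R S = {x. \<exists>c. (\<forall>s\<in>S. c s \<in> R) \<and> x = (\<Sum>s\<in>S. c s * s)}"

definition fin_gen_ideal :: "'a::field set \<Rightarrow> 'a set \<Rightarrow> bool" where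
  "fin_gen_ideal R I \<longleftrightarrow> (\<exists>S. finite S \<and> S \<subseteq> R \<and> I = ideal_gen R S)"

definition frac_inv :: "'a::field set \<Rightarrow> 'a set \<Rightarrow> 'a set" where
  "frac_inv R I = {x. \<forall>i\<in>I. x * i \<in> R}"

definition v_closure :: "'a::field set \<Rightarrow> 'a set \<Rightarrow> 'a set" where
  "v_closure R I = frac_inv R (frac_inv R I)"

definition fideal_prod :: "'a::field set \<Rightarrow> 'a set \<Rightarrow> 'a set" where
  "fideal_prod I J = {x. \<exists>(n::nat) f g. (\<forall>k<n. f k \<in> I \<and> g k \<in> J) \<and> x = (\<Sum>k<n. f k * g k)}"

primrec fideal_pow :: "'a::field set \<Rightarrow> 'a set \<Rightarrow> nat \<Rightarrow> 'a set" where
  "fideal_pow R I 0 = R"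
| "fideal_pow R I (Suc n) = fideal_prod (fideal_pow R I n) I"

definition v_reduction :: "'a::field set \<Rightarrow> 'a set \<Rightarrow> 'a set \<Rightarrow> bool" where
  "v_reduction R J I \<longleftrightarrow> is_ideal R J \<and> J \<subseteq> I \<and>
     (\<exists>n. v_closure R (fideal_prod J (fideal_pow R I n)) = v_closure R (fideal_pow R I (Suc n)))"

definition v_basic :: "'a::field set \<Rightarrow> 'a set \<Rightarrow> bool" where
  "v_basic R I \<longleftrightarrow> (\<forall>J. v_reduction R J I \<longrightarrow> v_closure R J = v_closure R I)"

definition v_domain :: "'a::field set \<Rightarrow> bool" where
  "v_domain R \<longleftrightarrow> (\<forall>I. is_ideal R I \<and> fin_gen_ideal R I \<and> I \<noteq> {0} \<longrightarrow>
      v_closure R (fideal_prod I (frac_inv R I)) = R)"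

text \<open>The concrete rings. T = k((X))[[Y,Z]] is modelled as ('k fls fps) fps:
  power series in Z whose coefficients are power series in Y over k((X)).
  The constant term of f is f $ 0 $ 0.\<close>

type_synonym 'k Tring = "'k fls fps fps"

definition Yvar :: "'k::field Tring" where
  "Yvar = fps_const fps_X"
definition Zvar :: "'k::field Tring" where
  "Zvar = fps_X"

text \<open>M = (Y,Z) T = series with zero constant term.\<close>
definition Mset :: "'k::field Tring set" where
  "Mset = {f. f $ 0 $ 0 = 0}"

text \<open>R = k[[X]] + M: constant term lies in k[[X]].\<close>
definition Rset :: "'k::field Tring set" where
  "Rset = {f. f $ 0 $ 0 \<in> range fps_to_fls}"

text \<open>R and M viewed inside the quotient field K = Frac(T) = Frac(R).\<close>
definition Rfr :: "'k::field Tring fract set" where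
  "Rfr = to_fract ` Rset"
definition Mfr :: "'k::field Tring fract set" where
  "Mfr = to_fract ` Mset"

end

theory Submission
  imports Defs
begin

text \<open>
  The overring \<open>T = k((X))[[Y,Z]]\<close> of \<open>R\<close> is completely integrally closed, satisfies
  \<open>(T : (Y,Z)) = T\<close>, and \<open>(R : T) = M\<close>. A finitely generated ideal \<open>I\<close> of \<open>R\<close> is either
  principal, and principal ideals are trivially v-basic, or satisfies \<open>(T : I) \<subseteq> (R : I)\<close>:
  if some \<open>x \<in> (T : I)\<close> sent an element of \<open>I\<close> to a unit of \<open>T\<close>, then a multiple of \<open>I\<close>
  would be generated inside \<open>T\<close> by elements including \<open>1\<close>, and such \<open>R\<close>-modules are principal.
  In the second case let \<open>J\<close> be a v-reduction, \<open>(J I\<^sup>n)\<^sup>-\<^sup>1 = (I\<^sup>n\<^sup>+\<^sup>1)\<^sup>-\<^sup>1\<close>. For \<open>y \<in> J\<^sup>-\<^sup>1\<close>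
  and \<open>i \<in> I\<close>, multiplying by \<open>Y\<close> and \<open>Z\<close> shows that \<open>w = y i\<close> maps \<open>(T : I\<^sup>n)\<close> into itself,
  so \<open>w\<close> is almost integral over \<open>T\<close> and lies in \<open>T\<close>; thus \<open>J\<^sup>-\<^sup>1 \<subseteq> (T : I) \<subseteq> I\<^sup>-\<^sup>1\<close> and
  \<open>J\<^sub>v = I\<^sub>v\<close>. On the other hand \<open>(Y,Z)\<^sup>-\<^sup>1 = T\<close>, so \<open>((Y,Z)(Y,Z)\<^sup>-\<^sup>1)\<^sub>v = M\<^sub>v = (R : T) = M\<close>.
\<close>

section \<open>Fractional ideals of a subring of a field\<close>

definition is_subring :: "'a::comm_ring_1 set \<Rightarrow> bool" where
  "is_subring R \<longleftrightarrow> 0 \<in> R \<and> 1 \<in> R \<and> (\<forall>a\<in>R. \<forall>b\<in>R. a + b \<in> R \<and> a * b \<in> R \<and> - a \<in> R)"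

definition is_submodule :: "'a::comm_ring_1 set \<Rightarrow> 'a set \<Rightarrow> bool" where
  "is_submodule R N \<longleftrightarrow> 0 \<in> N \<and> (\<forall>a\<in>N. \<forall>b\<in>N. a + b \<in> N) \<and> (\<forall>r\<in>R. \<forall>a\<in>N. r * a \<in> N)"

definition completely_integrally_closed :: "'a::field set \<Rightarrow> bool" where
  "completely_integrally_closed T \<longleftrightarrow>
     (\<forall>d w. d \<in> T \<and> d \<noteq> 0 \<and> (\<forall>k. d * w ^ k \<in> T) \<longrightarrow> w \<in> T)"

lemma is_subringD:
  assumes "is_subring R"
  shows "0 \<in> R" "1 \<in> R" "\<And>a b. a \<in> R \<Longrightarrow> b \<in> R \<Longrightarrow> a + b \<in> R"
    "\<And>a b. a \<in> R \<Longrightarrow> b \<in> R \<Longrightarrow> a * b \<in> R" "\<And>a. a \<in> R \<Longrightarrow> - a \<in> R"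
  using assms unfolding is_subring_def by blast+

lemma is_submodule_self: "is_subring R \<Longrightarrow> is_submodule R R"
  unfolding is_subring_def is_submodule_def by blast

lemma is_ideal_iff_submodule: "is_ideal R I \<longleftrightarrow> I \<subseteq> R \<and> is_submodule R I"
  unfolding is_ideal_def is_submodule_def by blast

lemma is_submodule_sum:
  "is_submodule R N \<Longrightarrow> (\<And>i. i \<in> A \<Longrightarrow> f i \<in> N) \<Longrightarrow> sum f A \<in> N"
  by (induction A rule: infinite_finite_induct) (simp_all add: is_submodule_def)

lemma is_subring_sum: "is_subring R \<Longrightarrow> (\<And>i. i \<in> A \<Longrightarrow> f i \<in> R) \<Longrightarrow> sum f A \<in> R"
  using is_submodule_sum is_submodule_self by blast

lemma is_subring_power: "is_subring R \<Longrightarrow> a \<in> R \<Longrightarrow> a ^ n \<in> R"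
  by (induction n) (simp_all add: is_subringD)

lemma is_subring_of_nat: "is_subring R \<Longrightarrow> of_nat n \<in> R"
  by (induction n) (simp_all add: is_subringD)

lemma is_subring_image:
  assumes R: "is_subring R" and h: "h 1 = 1" "\<And>a b. h (a + b) = h a + h b" "\<And>a b. h (a * b) = h a * h b"
  shows "is_subring (h ` R)"
proof -
  have h0: "h 0 = 0" using h(2)[of 0 0] by simp
  have "- h a = h (- a)" for a using h(2)[of a "- a"] h0 by (simp add: add.inverse_unique)
  then have "h a + h b \<in> h ` R" "h a * h b \<in> h ` R" "- h a \<in> h ` R" if "a \<in> R" "b \<in> R" for a b
    using R that by (simp_all flip: h(2,3) add: is_subringD)
  then show ?thesis using R h0 unfolding is_subring_def by (auto simp flip: h(1))
qed

lemma is_subring_vimage: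
  assumes S: "is_subring S" and h: "h 1 = 1" "\<And>a b. h (a + b) = h a + h b" "\<And>a b. h (a * b) = h a * h b"
  shows "is_subring (h -` S)"
proof -
  have h0: "h 0 = 0" using h(2)[of 0 0] by simp
  have "h (- a) = - h a" for a using h(2)[of a "- a"] h0 by (simp add: eq_neg_iff_add_eq_0 add.commute)
  then show ?thesis using S h h0 by (simp add: is_subring_def)
qed

lemma ideal_gen_subset:
  assumes "is_submodule R N" "S \<subseteq> N"
  shows "ideal_gen R S \<subseteq> N"
  using assms by (auto simp: ideal_gen_def is_submodule_def intro!: is_submodule_sum)

lemma is_submodule_ideal_gen:
  assumes "is_subring R"
  shows "is_submodule R (ideal_gen R S)"
  unfolding is_submodule_def
proof (intro conjI ballI)
  show "0 \<in> ideal_gen R S" unfolding ideal_gen_def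
    using assms by (intro CollectI exI[of _ "\<lambda>_. 0"]) (simp add: is_subringD)
next
  fix a b assume "a \<in> ideal_gen R S" "b \<in> ideal_gen R S"
  then obtain c d where "\<forall>s\<in>S. c s \<in> R" "a = (\<Sum>s\<in>S. c s * s)" "\<forall>s\<in>S. d s \<in> R" "b = (\<Sum>s\<in>S. d s * s)"
    unfolding ideal_gen_def by blast
  then show "a + b \<in> ideal_gen R S" unfolding ideal_gen_def using assms
    by (intro CollectI exI[of _ "\<lambda>s. c s + d s"]) (simp add: is_subringD distrib_right sum.distrib)
next
  fix r a assume "r \<in> R" "a \<in> ideal_gen R S"
  then obtain c where "\<forall>s\<in>S. c s \<in> R" "a = (\<Sum>s\<in>S. c s * s)" unfolding ideal_gen_def by blast
  then show "r * a \<in> ideal_gen R S" unfolding ideal_gen_def using assms \<open>r \<in> R\<close>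
    by (intro CollectI exI[of _ "\<lambda>s. r * c s"]) (simp add: is_subringD sum_distrib_left mult.assoc)
qed

lemma subset_ideal_gen:
  assumes "is_subring R" "finite S"
  shows "S \<subseteq> ideal_gen R S"
proof
  fix x assume x: "x \<in> S"
  have "(\<Sum>s\<in>S. (if s = x then 1 else 0) * s) = (\<Sum>s\<in>S. if s = x then s else 0)"
    by (rule sum.cong) auto
  then have "x = (\<Sum>s\<in>S. (if s = x then 1 else 0) * s)" using assms(2) x by simp
  then show "x \<in> ideal_gen R S" unfolding ideal_gen_def using assms(1)
    by (intro CollectI exI[of _ "\<lambda>s. if s = x then 1 else 0"]) (simp add: is_subringD)
qed

lemma is_submodule_scale:
  assumes N: "is_submodule R N"
  shows "is_submodule R ((*) c ` N)"
  unfolding is_submodule_def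
proof (intro conjI ballI)
  show "0 \<in> (*) c ` N" using N by (intro image_eqI[of _ _ 0]) (simp_all add: is_submodule_def)
next
  fix a b assume "a \<in> (*) c ` N" "b \<in> (*) c ` N"
  then obtain a' b' where "a' \<in> N" "b' \<in> N" "a = c * a'" "b = c * b'" by blast
  then show "a + b \<in> (*) c ` N" using N by (auto simp: is_submodule_def distrib_left[symmetric])
next
  fix r a assume "r \<in> R" "a \<in> (*) c ` N"
  then obtain a' where "a' \<in> N" "a = c * a'" by blast
  then show "r * a \<in> (*) c ` N" using N \<open>r \<in> R\<close>
    by (auto simp: is_submodule_def mult.left_commute[of r] intro!: imageI)
qed

lemma ideal_gen_scale:
  fixes e :: "'a::field"
  assumes "is_subring R" "finite S" "e \<noteq> 0"
  shows "(*) e ` ideal_gen R S = ideal_gen R ((*) e ` S)"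
proof
  show "ideal_gen R ((*) e ` S) \<subseteq> (*) e ` ideal_gen R S"
    using assms subset_ideal_gen
    by (intro ideal_gen_subset is_submodule_scale is_submodule_ideal_gen) auto
next
  have "S \<subseteq> (*) (inverse e) ` ideal_gen R ((*) e ` S)"
  proof
    fix s assume "s \<in> S"
    then have "e * s \<in> ideal_gen R ((*) e ` S)" using subset_ideal_gen[OF assms(1)] assms(2) by auto
    then show "s \<in> (*) (inverse e) ` ideal_gen R ((*) e ` S)"
      using assms(3) by (intro image_eqI[of _ _ "e * s"]) (simp_all add: field_simps)
  qed
  then have "ideal_gen R S \<subseteq> (*) (inverse e) ` ideal_gen R ((*) e ` S)"
    using assms(1) by (intro ideal_gen_subset is_submodule_scale is_submodule_ideal_gen)
  then show "(*) e ` ideal_gen R S \<subseteq> ideal_gen R ((*) e ` S)"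
    using assms(3) by (auto simp: image_iff field_simps)
qed

lemma fideal_prod_mem: "a \<in> A \<Longrightarrow> b \<in> B \<Longrightarrow> a * b \<in> fideal_prod A B"
  unfolding fideal_prod_def
  by (intro CollectI exI[of _ "1::nat"] exI[of _ "\<lambda>_. a"] exI[of _ "\<lambda>_. b"]) auto

lemma fideal_prod_add_mem:
  assumes "a \<in> A" "b \<in> B" "c \<in> A" "d \<in> B"
  shows "a * b + c * d \<in> fideal_prod A B"
  unfolding fideal_prod_def
proof (intro CollectI exI conjI)
  show "\<forall>k<2::nat. (if k = 0 then a else c) \<in> A \<and> (if k = 0 then b else d) \<in> B" using assms by auto
  show "a * b + c * d = (\<Sum>k<2::nat. (if k = 0 then a else c) * (if k = 0 then b else d))"
    by (simp add: numeral_2_eq_2)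
qed

lemma fideal_prod_subset:
  assumes "0 \<in> N" "\<And>a b. a \<in> N \<Longrightarrow> b \<in> N \<Longrightarrow> a + b \<in> N"
    and "\<And>a b. a \<in> A \<Longrightarrow> b \<in> B \<Longrightarrow> a * b \<in> N"
  shows "fideal_prod A B \<subseteq> N"
proof
  fix x assume "x \<in> fideal_prod A B"
  then obtain n :: nat and f g where fg: "\<forall>k<n. f k \<in> A \<and> g k \<in> B" "x = (\<Sum>k<n. f k * g k)"
    unfolding fideal_prod_def by blast
  have "(\<Sum>k<m. f k * g k) \<in> N" if "m \<le> n" for m
    using that by (induction m) (simp_all add: assms fg(1))
  then show "x \<in> N" using fg(2) by blast
qed

lemma fideal_prod_scaled_ring:
  assumes "is_subring R" "is_submodule R A"
  shows "fideal_prod A ((*) c ` R) = (*) c ` A"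
proof
  have N: "is_submodule R ((*) c ` A)" using assms(2) by (rule is_submodule_scale)
  show "fideal_prod A ((*) c ` R) \<subseteq> (*) c ` A"
  proof (rule fideal_prod_subset)
    show "a * b \<in> (*) c ` A" if "a \<in> A" "b \<in> (*) c ` R" for a b
      using that assms(2) unfolding is_submodule_def by (auto simp: image_iff ac_simps)
  qed (use N in \<open>auto simp: is_submodule_def\<close>)
  show "(*) c ` A \<subseteq> fideal_prod A ((*) c ` R)"
  proof
    fix x assume "x \<in> (*) c ` A"
    then obtain a where "a \<in> A" "x = c * a" by blast
    moreover have "c * 1 \<in> (*) c ` R" using assms(1) by (intro imageI) (simp add: is_subringD)
    ultimately show "x \<in> fideal_prod A ((*) c ` R)"
      using fideal_prod_mem[of a A "c * 1"] by (simp add: ac_simps)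
  qed
qed

lemma fideal_pow_principal:
  assumes "is_subring R"
  shows "fideal_pow R ((*) c ` R) n = (*) (c ^ n) ` R"
proof (induction n)
  case (Suc n)
  have "fideal_prod ((*) (c ^ n) ` R) ((*) c ` R) = (*) c ` (*) (c ^ n) ` R"
    using assms by (intro fideal_prod_scaled_ring is_submodule_scale is_submodule_self)
  then show ?case using Suc by (simp add: image_image ac_simps)
qed simp

lemma fideal_pow_subset:
  assumes "is_subring R" "I \<subseteq> R"
  shows "fideal_pow R I n \<subseteq> R"
proof (induction n)
  case (Suc n)
  show ?case unfolding fideal_pow.simps
    by (rule fideal_prod_subset) (use Suc assms is_subringD[OF assms(1)] in blast)+
qed simp

lemma power_mem_fideal_pow:
  assumes "is_subring R" "i \<in> I"
  shows "i ^ n \<in> fideal_pow R I n"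
proof (induction n)
  case (Suc n)
  show ?case using fideal_prod_mem[OF Suc assms(2)] by (simp add: mult.commute)
qed (use assms in \<open>simp add: is_subringD\<close>)

lemma frac_inv_antimono: "A \<subseteq> B \<Longrightarrow> frac_inv R B \<subseteq> frac_inv R A"
  unfolding frac_inv_def by auto

lemma subset_frac_inv_frac_inv: "A \<subseteq> frac_inv R (frac_inv R A)"
  unfolding frac_inv_def by (auto simp: mult.commute)

lemma frac_inv_v_closure: "frac_inv R (v_closure R A) = frac_inv R A"
  unfolding v_closure_def by (meson frac_inv_antimono subset_frac_inv_frac_inv subset_antisym)

lemma frac_inv_scale:
  assumes "c \<noteq> 0"
  shows "frac_inv R ((*) c ` A) = (*) (inverse c) ` frac_inv R A"
proof
  show "frac_inv R ((*) c ` A) \<subseteq> (*) (inverse c) ` frac_inv R A"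
  proof
    fix x assume "x \<in> frac_inv R ((*) c ` A)"
    then have "x * c \<in> frac_inv R A" unfolding frac_inv_def by (auto simp: mult.assoc)
    then show "x \<in> (*) (inverse c) ` frac_inv R A"
      using assms by (intro image_eqI[of _ _ "x * c"]) (auto simp: field_simps)
  qed
  show "(*) (inverse c) ` frac_inv R A \<subseteq> frac_inv R ((*) c ` A)"
  proof
    fix x assume "x \<in> (*) (inverse c) ` frac_inv R A"
    then obtain y where y: "\<forall>a\<in>A. y * a \<in> R" "x = inverse c * y" unfolding frac_inv_def by blast
    show "x \<in> frac_inv R ((*) c ` A)" unfolding frac_inv_def
    proof (intro CollectI ballI)
      fix t assume "t \<in> (*) c ` A"
      then obtain a where "a \<in> A" "t = c * a" by blast
      moreover have "x * (c * a) = y * a" using assms y(2) by (simp add: field_simps)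
      ultimately show "x * t \<in> R" using y(1) by metis
    qed
  qed
qed

lemma v_closure_scale:
  assumes "c \<noteq> 0"
  shows "v_closure R ((*) c ` A) = (*) c ` v_closure R A"
  unfolding v_closure_def using assms by (simp add: frac_inv_scale)

lemma frac_inv_self:
  assumes "is_subring R"
  shows "frac_inv R R = R"
proof
  show "frac_inv R R \<subseteq> R"
    using is_subringD(2)[OF assms] unfolding frac_inv_def by force
  show "R \<subseteq> frac_inv R R"
    using is_subringD(4)[OF assms] unfolding frac_inv_def by blast
qed

lemma v_closure_self: "is_subring R \<Longrightarrow> v_closure R R = R"
  unfolding v_closure_def by (simp add: frac_inv_self)

lemma image_mult_cancel:
  fixes c :: "'a::field"
  assumes "(*) c ` A = (*) c ` B" "c \<noteq> 0"
  shows "A = B"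
proof -
  have inv: "(*) (inverse c) ` (*) c ` X = X" for X
    using assms(2) by (simp add: image_image mult.assoc[symmetric])
  have "(*) (inverse c) ` (*) c ` A = (*) (inverse c) ` (*) c ` B" using assms(1) by simp
  then show ?thesis by (simp only: inv)
qed

section \<open>A criterion for v-basic ideals\<close>

lemma v_basic_principal:
  assumes R: "is_subring R" and "c \<noteq> 0"
  shows "v_basic R ((*) c ` R)"
  unfolding v_basic_def
proof (intro allI impI)
  fix J assume "v_reduction R J ((*) c ` R)"
  then obtain n where J: "is_ideal R J" and
    eq: "v_closure R (fideal_prod J ((*) (c ^ n) ` R)) = v_closure R ((*) (c ^ Suc n) ` R)"
    unfolding v_reduction_def fideal_pow_principal[OF R] by blast
  have "fideal_prod J ((*) (c ^ n) ` R) = (*) (c ^ n) ` J"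
    using R J by (intro fideal_prod_scaled_ring) (simp_all add: is_ideal_iff_submodule)
  then have "(*) (c ^ n) ` v_closure R J = (*) (c ^ Suc n) ` R"
    using eq \<open>c \<noteq> 0\<close> by (simp add: v_closure_scale v_closure_self[OF R])
  then have "(*) (c ^ n) ` v_closure R J = (*) (c ^ n) ` ((*) c ` R)"
    by (simp add: image_image ac_simps)
  then have "v_closure R J = (*) c ` R" by (rule image_mult_cancel) (simp add: \<open>c \<noteq> 0\<close>)
  also have "\<dots> = v_closure R ((*) c ` R)" using \<open>c \<noteq> 0\<close> by (simp add: v_closure_scale v_closure_self[OF R])
  finally show "v_closure R J = v_closure R ((*) c ` R)" .
qed

lemma completely_integrally_closedD_stable:
  assumes "completely_integrally_closed T" "1 \<in> Q" "d \<noteq> 0"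
    and "\<And>q. q \<in> Q \<Longrightarrow> d * q \<in> T" "\<And>q. q \<in> Q \<Longrightarrow> w * q \<in> Q"
  shows "w \<in> T"
proof -
  have "w ^ k \<in> Q" for k by (induction k) (use assms(2,5) in auto)
  then have "d * w ^ k \<in> T" for k using assms(4) by blast
  moreover have "d \<in> T" using assms(2,4) by force
  ultimately show ?thesis using assms(1,3) unfolding completely_integrally_closed_def by blast
qed

lemma frac_inv_overring_stable:
  assumes T: "is_subring T" "R \<subseteq> T" and G: "G \<subseteq> frac_inv R T" "frac_inv T G \<subseteq> T"
    and eq: "frac_inv R (fideal_prod J P) = frac_inv R (fideal_prod P I)"
    and y: "y \<in> frac_inv R J" and "i \<in> I" and z: "z \<in> frac_inv T P"
  shows "y * i * z \<in> frac_inv T P"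
  unfolding frac_inv_def
proof (intro CollectI ballI)
  fix a assume "a \<in> P"
  have "fideal_prod J P \<subseteq> {p. y * z * p \<in> T}"
  proof (rule fideal_prod_subset)
    fix f g assume "f \<in> J" "g \<in> P"
    then have "(y * f) * (z * g) \<in> T"
      using y z T is_subringD(4)[OF T(1)] unfolding frac_inv_def by blast
    then show "f * g \<in> {p. y * z * p \<in> T}" by (simp add: ac_simps)
  qed (use is_subringD[OF T(1)] in \<open>simp_all add: distrib_left\<close>)
  then have "g * (y * z) \<in> frac_inv R (fideal_prod J P)" if "g \<in> G" for g
    unfolding frac_inv_def
  proof (intro CollectI ballI)
    fix p assume "p \<in> fideal_prod J P"
    then have "g * (y * z * p) \<in> R" using \<open>fideal_prod J P \<subseteq> _\<close> G(1) that unfolding frac_inv_def by blast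
    then show "g * (y * z) * p \<in> R" by (simp add: ac_simps)
  qed
  then have "g * (y * z) * (a * i) \<in> T" if "g \<in> G" for g
    using that eq fideal_prod_mem[OF \<open>a \<in> P\<close> \<open>i \<in> I\<close>] T(2) unfolding frac_inv_def by blast
  then have "y * i * z * a \<in> frac_inv T G" unfolding frac_inv_def by (simp add: ac_simps)
  then show "y * i * z * a \<in> T" using G(2) by blast
qed

theorem v_basic_if_frac_inv_overring:
  assumes R: "is_subring R" and T: "is_subring T" "R \<subseteq> T" "completely_integrally_closed T"
    and G: "G \<subseteq> frac_inv R T" "frac_inv T G \<subseteq> T"
    and I: "is_ideal R I" "I \<noteq> {0}" "frac_inv T I \<subseteq> frac_inv R I"
  shows "v_basic R I"
  unfolding v_basic_def
proof (intro allI impI)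
  fix J assume "v_reduction R J I"
  then obtain n where J: "J \<subseteq> I" and
    eq: "v_closure R (fideal_prod J (fideal_pow R I n)) = v_closure R (fideal_pow R I (Suc n))"
    unfolding v_reduction_def by blast
  define P where "P = fideal_pow R I n"
  have eq': "frac_inv R (fideal_prod J P) = frac_inv R (fideal_prod P I)"
    using arg_cong[OF eq, of "frac_inv R"] by (simp add: frac_inv_v_closure P_def)
  obtain i0 where i0: "i0 \<in> I" "i0 \<noteq> 0" using I(1,2) unfolding is_ideal_def by blast
  have "i0 ^ n \<in> P" unfolding P_def by (rule power_mem_fideal_pow[OF R i0(1)])
  have "P \<subseteq> R" using I(1) unfolding P_def is_ideal_def by (intro fideal_pow_subset[OF R]) blast
  have "y * i \<in> T" if y: "y \<in> frac_inv R J" and i: "i \<in> I" for y i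
  proof (rule completely_integrally_closedD_stable[OF T(3)])
    show "1 \<in> frac_inv T P" using \<open>P \<subseteq> R\<close> T(2) unfolding frac_inv_def by auto
    show "i0 ^ n \<noteq> 0" using i0(2) by simp
    show "i0 ^ n * q \<in> T" if "q \<in> frac_inv T P" for q
      using that \<open>i0 ^ n \<in> P\<close> unfolding frac_inv_def by (auto simp: mult.commute)
    show "y * i * q \<in> frac_inv T P" if "q \<in> frac_inv T P" for q
      using frac_inv_overring_stable[OF T(1,2) G eq' y i that] .
  qed
  then have "frac_inv R J \<subseteq> frac_inv T I" unfolding frac_inv_def[of T] by blast
  then have "frac_inv R J = frac_inv R I" using I(3) frac_inv_antimono[OF J] by blast
  then show "v_closure R J = v_closure R I" unfolding v_closure_def by simp
qed

section \<open>The rings \<open>T\<close>, \<open>R\<close> and \<open>M\<close>\<close>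

abbreviation const_term :: "'k::field Tring \<Rightarrow> 'k fls" where
  "const_term f \<equiv> f $ 0 $ 0"

definition Tfr :: "'k::field Tring fract set" where
  "Tfr = range to_fract"

definition Xpow :: "int \<Rightarrow> 'k::field Tring" where
  "Xpow a = fps_const (fps_const (fls_X_intpow a))"

lemma range_fps_to_fls_iff: "c \<in> range fps_to_fls \<longleftrightarrow> 0 \<le> fls_subdegree c"
  by (metis fls_regpart_to_fls_trivial fls_subdegree_fls_to_fps_gt0 image_iff rangeI)

lemma is_subring_range_fps_to_fls: "is_subring (range (fps_to_fls :: 'a::comm_ring_1 fps \<Rightarrow> _))"
  using is_subring_image[of UNIV fps_to_fls]
  by (simp add: is_subring_def fls_times_fps_to_fls)

lemma is_subring_Rfr: "is_subring Rfr"
proof -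
  have "is_subring ((\<lambda>f. const_term f) -` range fps_to_fls :: 'k::field Tring set)"
    by (rule is_subring_vimage[OF is_subring_range_fps_to_fls]) simp_all
  then have "is_subring (to_fract ` (Rset :: 'k::field Tring set))"
    by (intro is_subring_image) (simp_all add: Rset_def vimage_def)
  then show ?thesis unfolding Rfr_def .
qed

lemma is_subring_Tfr: "is_subring Tfr"
  unfolding Tfr_def by (rule is_subring_image) (simp_all add: is_subring_def)

lemma to_fract_in_Rfr_iff [simp]: "to_fract f \<in> Rfr \<longleftrightarrow> 0 \<le> fls_subdegree (const_term f)"
  by (auto simp: Rfr_def Rset_def range_fps_to_fls_iff)

lemma to_fract_in_Mfr_iff [simp]: "to_fract f \<in> Mfr \<longleftrightarrow> const_term f = 0"
  by (auto simp: Mfr_def Mset_def)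

lemma to_fract_in_Tfr [simp]: "to_fract f \<in> Tfr"
  by (simp add: Tfr_def)

lemma Rfr_subset_Tfr: "Rfr \<subseteq> Tfr"
  by (auto simp: Rfr_def)

lemma Mfr_subset_Rfr: "Mfr \<subseteq> Rfr"
  by (auto simp: Mfr_def Mset_def)

lemma Mfr_mult_Tfr: "m \<in> Mfr \<Longrightarrow> t \<in> Tfr \<Longrightarrow> m * t \<in> Mfr"
  by (auto simp: Mfr_def Mset_def Tfr_def simp flip: to_fract_mult)

lemma is_submodule_Mfr: "is_submodule Rfr Mfr"
  unfolding is_submodule_def
  by (auto simp: Mfr_def Mset_def Rfr_def simp flip: to_fract_add to_fract_mult)

lemma Xpow_add: "Xpow a * Xpow b = Xpow (a + b)"
  by (simp add: Xpow_def fls_X_intpow_times_fls_X_intpow)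

lemma Xpow_0 [simp]: "Xpow 0 = 1"
  by (simp add: Xpow_def)

lemma const_term_Xpow [simp]: "const_term (Xpow a) = fls_X_intpow a"
  by (simp add: Xpow_def)

lemma const_term_Yvar [simp]: "const_term Yvar = 0" and const_term_Zvar [simp]: "const_term Zvar = 0"
  by (simp_all add: Yvar_def Zvar_def)

lemma Yvar_nonzero [simp]: "Yvar \<noteq> 0"
  by (simp add: Yvar_def)

lemma frac_inv_Tfr_Y_Z: "frac_inv Tfr {to_fract Yvar, to_fract Zvar} \<subseteq> (Tfr :: 'k::field Tring fract set)"
proof
  fix x :: "'k Tring fract" assume "x \<in> frac_inv Tfr {to_fract Yvar, to_fract Zvar}"
  then obtain a b where ab: "x * to_fract Yvar = to_fract a" "x * to_fract Zvar = to_fract b"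
    by (auto simp: frac_inv_def Tfr_def)
  have "to_fract (a * Zvar) = to_fract (b * Yvar)"
    by (simp flip: ab add: ac_simps)
  then have eq: "a * Zvar = b * Yvar" by (simp only: to_fract_eq_iff)
  define s where "s = Abs_fps (\<lambda>j. b $ (j + 1))"
  have "a = Yvar * s"
  proof (rule fps_ext)
    fix j
    have "(a * Zvar) $ (j + 1) = (b * Yvar) $ (j + 1)" using eq by simp
    then show "a $ j = (Yvar * s) $ j" by (simp add: Zvar_def Yvar_def s_def mult.commute)
  qed
  then have "x * to_fract Yvar = to_fract s * to_fract Yvar" using ab(1) by (simp add: ac_simps)
  then show "x \<in> Tfr" by simp
qed

lemma Mset_decomp:
  fixes f :: "'k::field Tring"
  assumes "const_term f = 0"
  obtains p q where "f = Yvar * p + Zvar * q"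
proof
  define p where "p = fps_const (Abs_fps (\<lambda>n. f $ 0 $ (n + 1)))"
  define q where "q = Abs_fps (\<lambda>n. f $ (n + 1))"
  have "fps_X * Abs_fps (\<lambda>n. f $ 0 $ (n + 1)) = f $ 0"
    by (rule fps_ext) (use assms in simp)
  then have Yp: "Yvar * p = fps_const (f $ 0)"
    unfolding Yvar_def p_def by simp
  show "f = Yvar * p + Zvar * q"
    by (rule fps_ext) (simp add: Yp q_def Zvar_def)
qed

lemma const_term_nonzero_unit:
  fixes u :: "'k::field Tring"
  assumes "const_term u \<noteq> 0"
  obtains v where "u * v = 1" "const_term v = inverse (const_term u)"
proof
  define v0 where "v0 = fps_right_inverse (u $ 0) (inverse (const_term u))"
  have "u $ 0 * v0 = 1" unfolding v0_def using assms by (intro fps_right_inverse) simp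
  then show "u * fps_right_inverse u v0 = 1" by (rule fps_right_inverse)
  show "const_term (fps_right_inverse u v0) = inverse (const_term u)"
    by (simp add: v0_def fps_lr_inverse_nth_0)
qed

lemma frac_inv_Rfr_Tfr: "frac_inv Rfr Tfr = (Mfr :: 'k::field Tring fract set)"
proof
  show "Mfr \<subseteq> frac_inv Rfr Tfr" unfolding frac_inv_def using Mfr_mult_Tfr Mfr_subset_Rfr by blast
  show "frac_inv Rfr Tfr \<subseteq> (Mfr :: 'k Tring fract set)"
  proof
    fix x :: "'k Tring fract" assume x: "x \<in> frac_inv Rfr Tfr"
    then have "x * 1 \<in> Rfr" unfolding frac_inv_def using is_subringD(2)[OF is_subring_Tfr] by blast
    then obtain f where f: "x = to_fract f" using Rfr_subset_Tfr by (auto simp: Tfr_def)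
    have "const_term f = 0"
    proof (rule ccontr)
      assume nz: "const_term f \<noteq> 0"
      define n where "n = fls_subdegree (const_term f) + 1"
      have "to_fract (f * Xpow (- n)) \<in> Rfr" using x unfolding frac_inv_def f by simp
      then show False
        using fls_subdegree_mult_fls_X_intpow(2)[OF nz, of "- n"] by (simp add: n_def del: to_fract_mult)
    qed
    then show "x \<in> Mfr" using f by simp
  qed
qed

lemma to_fract_in_Xpow_Rfr:
  fixes u :: "'k::field Tring"
  assumes "const_term u = 0 \<or> a \<le> fls_subdegree (const_term u)"
  shows "to_fract u \<in> (*) (to_fract (Xpow a)) ` Rfr"
proof -
  have "u = Xpow a * (Xpow (- a) * u)" by (simp add: mult.assoc[symmetric] Xpow_add)
  moreover have "to_fract (Xpow (- a) * u) \<in> Rfr"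
  proof (cases "const_term u = 0")
    case False
    then show ?thesis
      using assms fls_subdegree_mult_fls_X_intpow(1)[OF False, of "- a"] by (simp del: to_fract_mult)
  qed (simp del: to_fract_mult)
  ultimately show ?thesis by (metis image_eqI to_fract_mult)
qed

lemma Xpow_subdegree_in_Rfr_mult:
  fixes u :: "'k::field Tring"
  assumes "const_term u \<noteq> 0"
  obtains v where "to_fract v \<in> Rfr" "v * u = Xpow (fls_subdegree (const_term u))"
proof -
  obtain w where w: "u * w = 1" "const_term w = inverse (const_term u)"
    using const_term_nonzero_unit[OF assms] .
  define v where "v = Xpow (fls_subdegree (const_term u)) * w"
  have "to_fract v \<in> Rfr" using assms w(2) by (simp add: v_def del: to_fract_mult)
  moreover have "v * u = Xpow (fls_subdegree (const_term u))" using w(1) by (simp add: v_def ac_simps)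
  ultimately show ?thesis using that by blast
qed

text \<open>The generator is \<open>X\<^sup>a\<close>, where \<open>a\<close> is the least of \<open>0\<close> and the \<open>X\<close>-orders of the
  constant terms of the generators.\<close>

lemma ideal_gen_principal_if_one_mem:
  fixes S :: "'k::field Tring fract set"
  assumes "finite S" "S \<subseteq> Tfr" "1 \<in> ideal_gen Rfr S"
  shows "\<exists>c. ideal_gen Rfr S = (*) c ` Rfr"
proof -
  obtain U where U: "finite U" "S = to_fract ` U"
    using finite_subset_image[OF assms(1), of to_fract UNIV] assms(2) unfolding Tfr_def by auto
  define D where "D = (\<lambda>u. fls_subdegree (const_term u)) ` {u \<in> U. const_term u \<noteq> 0}"
  define a where "a = Min (insert 0 D)"
  have "finite D" using U(1) by (simp add: D_def)
  then have a: "a \<le> 0" "\<And>d. d \<in> D \<Longrightarrow> a \<le> d" "a \<in> insert 0 D"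
    unfolding a_def using Min_in[of "insert 0 D"] by simp_all
  have N: "is_submodule Rfr (ideal_gen Rfr S)" by (rule is_submodule_ideal_gen[OF is_subring_Rfr])
  have "to_fract u \<in> (*) (to_fract (Xpow a)) ` Rfr" if "u \<in> U" for u
    using that a(2) unfolding D_def by (intro to_fract_in_Xpow_Rfr) blast
  then have "S \<subseteq> (*) (to_fract (Xpow a)) ` Rfr" using U(2) by blast
  then have "ideal_gen Rfr S \<subseteq> (*) (to_fract (Xpow a)) ` Rfr"
    by (intro ideal_gen_subset is_submodule_scale is_submodule_self is_subring_Rfr)
  moreover have "to_fract (Xpow a) \<in> ideal_gen Rfr S"
    using a(3)
  proof
    assume "a = 0"
    then show ?thesis using assms(3) by simp
  next
    assume "a \<in> D"
    then obtain u where u: "u \<in> U" "const_term u \<noteq> 0" "a = fls_subdegree (const_term u)"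
      by (auto simp: D_def)
    obtain v where v: "to_fract v \<in> Rfr" "v * u = Xpow a"
      using Xpow_subdegree_in_Rfr_mult[OF u(2)] unfolding u(3) .
    have "to_fract u \<in> ideal_gen Rfr S"
      using subset_ideal_gen[OF is_subring_Rfr assms(1)] U(2) u(1) by blast
    then have "to_fract v * to_fract u \<in> ideal_gen Rfr S" using N v(1) unfolding is_submodule_def by blast
    then show ?thesis unfolding v(2)[symmetric] to_fract_mult .
  qed
  then have "(*) (to_fract (Xpow a)) ` Rfr \<subseteq> ideal_gen Rfr S"
    using N unfolding is_submodule_def by (auto simp: mult.commute[of "to_fract (Xpow a)"])
  ultimately have "ideal_gen Rfr S = (*) (to_fract (Xpow a)) ` Rfr" by (rule subset_antisym)
  then show ?thesis ..
qed

lemma frac_inv_Tfr_subset_Rfr: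
  fixes S :: "'k::field Tring fract set"
  assumes I: "I = ideal_gen Rfr S" "finite S" and np: "\<nexists>c. I = (*) c ` Rfr"
  shows "frac_inv Tfr I \<subseteq> frac_inv Rfr I"
proof (intro subsetI, unfold frac_inv_def[of Rfr], intro CollectI ballI)
  fix x i assume x: "x \<in> frac_inv Tfr I" and i: "i \<in> I"
  then obtain u where u: "x * i = to_fract u" unfolding frac_inv_def Tfr_def by blast
  show "x * i \<in> Rfr"
  proof (cases "const_term u = 0")
    case True
    then show ?thesis using u by simp
  next
    case False
    obtain v where v: "u * v = 1" using const_term_nonzero_unit[OF False] by blast
    define e where "e = x * to_fract v"
    have "e * i = to_fract (u * v)" by (simp add: e_def u[symmetric] ac_simps)
    then have ei: "e * i = 1" using v by simp
    then have "e \<noteq> 0" by auto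
    have "S \<subseteq> I" using subset_ideal_gen[OF is_subring_Rfr I(2)] I(1) by simp
    have "(*) e ` S \<subseteq> Tfr"
    proof
      fix t assume "t \<in> (*) e ` S"
      then obtain s where "s \<in> S" "t = x * s * to_fract v" by (auto simp: e_def ac_simps)
      moreover have "x * s \<in> Tfr" using x \<open>s \<in> S\<close> \<open>S \<subseteq> I\<close> unfolding frac_inv_def by blast
      ultimately show "t \<in> Tfr" by (auto intro: is_subringD(4)[OF is_subring_Tfr])
    qed
    moreover have eI: "(*) e ` I = ideal_gen Rfr ((*) e ` S)"
      unfolding I(1) by (rule ideal_gen_scale[OF is_subring_Rfr I(2) \<open>e \<noteq> 0\<close>])
    moreover have "1 \<in> (*) e ` I" using ei i by (intro image_eqI[of _ _ i]) simp_all
    then have "1 \<in> ideal_gen Rfr ((*) e ` S)" by (simp only: eI)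
    ultimately obtain c where c: "(*) e ` I = (*) c ` Rfr"
      using ideal_gen_principal_if_one_mem[of "(*) e ` S"] I(2) by auto
    have cancel: "e * (inverse e * c * r) = c * r" for r
      using \<open>e \<noteq> 0\<close> by (simp add: mult.assoc[symmetric])
    have "(*) e ` I = (*) e ` ((*) (inverse e * c) ` Rfr)" by (simp only: c image_image cancel)
    then have "I = (*) (inverse e * c) ` Rfr" using \<open>e \<noteq> 0\<close> by (rule image_mult_cancel)
    then show ?thesis using np by blast
  qed
qed

section \<open>\<open>T\<close> is completely integrally closed\<close>

lemma range_fps_to_fls_if_powers:
  fixes e c :: "'a::field fls"
  assumes "e \<noteq> 0" "\<And>k. e * c ^ k \<in> range fps_to_fls"
  shows "c \<in> range fps_to_fls"
proof (cases "c = 0")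
  case False
  show ?thesis unfolding range_fps_to_fls_iff
  proof (rule ccontr)
    assume neg: "\<not> 0 \<le> fls_subdegree c"
    define k where "k = nat \<bar>fls_subdegree e\<bar> + 1"
    have "fls_subdegree (e * c ^ k) = fls_subdegree e + int k * fls_subdegree c"
      using assms(1) False by (simp add: fls_subdegree_pow)
    also have "\<dots> \<le> fls_subdegree e - int k"
      using neg mult_left_mono[of "fls_subdegree c" "-1" "int k"] by simp
    also have "\<dots> < 0" by (simp add: k_def)
    finally show False using assms(2)[of k] by (simp add: range_fps_to_fls_iff)
  qed
qed (simp add: range_fps_to_fls_iff)

definition coeffs_to_fls :: "'a::field fps fps \<Rightarrow> 'a fls fps" where
  "coeffs_to_fls f = Abs_fps (\<lambda>n. fps_to_fls (f $ n))"

lemma coeffs_to_fls_nth [simp]: "coeffs_to_fls f $ n = fps_to_fls (f $ n)"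
  by (simp add: coeffs_to_fls_def)

lemma coeffs_to_fls_add [simp]: "coeffs_to_fls (f + g) = coeffs_to_fls f + coeffs_to_fls g"
  by (rule fps_ext) simp

lemma coeffs_to_fls_mult [simp]: "coeffs_to_fls (f * g) = coeffs_to_fls f * coeffs_to_fls g"
proof (rule fps_ext)
  have "fps_to_fls (sum h A) = (\<Sum>i\<in>A. fps_to_fls (h i))" for h :: "nat \<Rightarrow> 'a fps" and A
    by (induction A rule: infinite_finite_induct) simp_all
  then show "coeffs_to_fls (f * g) $ n = (coeffs_to_fls f * coeffs_to_fls g) $ n" for n
    by (simp add: fps_mult_nth fls_times_fps_to_fls)
qed

lemma coeffs_to_fls_0 [simp]: "coeffs_to_fls 0 = 0"
  by (rule fps_ext) simp

lemma coeffs_to_fls_1 [simp]: "coeffs_to_fls 1 = 1"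
  by (rule fps_ext) simp

lemma coeffs_to_fls_eq_iff [simp]: "coeffs_to_fls f = coeffs_to_fls g \<longleftrightarrow> f = g"
  by (metis coeffs_to_fls_nth fps_ext fps_to_fls_eq_iff)

lemma range_coeffs_to_fls_iff: "y \<in> range coeffs_to_fls \<longleftrightarrow> (\<forall>n. y $ n \<in> range fps_to_fls)"
proof
  assume "\<forall>n. y $ n \<in> range fps_to_fls"
  then have "coeffs_to_fls (Abs_fps (\<lambda>n. fls_regpart (y $ n))) = y"
    by (intro fps_ext) (simp add: range_fps_to_fls_iff)
  then show "y \<in> range coeffs_to_fls" by (metis rangeI)
qed auto

lemma is_subring_range_coeffs_to_fls: "is_subring (range coeffs_to_fls)"
  using is_subring_image[of UNIV coeffs_to_fls] by (simp add: is_subring_def)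

lemma fps_mult_power_nth_leading:
  fixes D y :: "'a::comm_ring_1 fps"
  assumes D: "D \<noteq> 0" and y: "\<And>i. i < m \<Longrightarrow> y $ i = 0"
  shows "(D * y ^ k) $ (subdegree D + k * m) = D $ subdegree D * (y $ m) ^ k"
proof -
  define r where "r = subdegree D"
  define y1 where "y1 = fps_shift m y"
  define D1 where "D1 = fps_shift r D"
  have ye: "y = fps_X ^ m * y1"
  proof (cases "y = 0")
    case False
    then have "subdegree y \<ge> m" using y by (intro subdegree_geI) auto
    then show ?thesis unfolding y1_def by (intro fps_conv_fps_X_power_mult_fps_shift) simp
  qed (simp add: y1_def)
  have De: "D = fps_X ^ r * D1" unfolding D1_def r_def
    by (intro fps_conv_fps_X_power_mult_fps_shift) simp
  have "D * y ^ k = fps_X ^ (r + k * m) * (D1 * y1 ^ k)"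
    unfolding ye De by (simp add: power_mult_distrib power_add ac_simps flip: power_mult)
  then have "(D * y ^ k) $ (r + k * m) = (D1 * y1 ^ k) $ 0"
    by (simp add: fps_X_power_mult_nth)
  also have "\<dots> = D $ r * (y $ m) ^ k"
    by (simp add: D1_def y1_def fps_power_zeroth)
  finally show ?thesis unfolding r_def .
qed

lemma range_coeffs_to_fls_if_powers:
  fixes D x :: "'a::field fls fps"
  assumes D: "D \<noteq> 0" and Dx: "\<And>k. D * x ^ k \<in> range coeffs_to_fls"
  shows "x \<in> range coeffs_to_fls"
  unfolding range_coeffs_to_fls_iff
proof
  fix m show "x $ m \<in> range fps_to_fls"
  proof (induction m rule: less_induct)
    case (less m)
    have S: "is_subring (range coeffs_to_fls :: 'a fls fps set)" by (rule is_subring_range_coeffs_to_fls)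
    \<comment> \<open>\<open>y\<close> has order \<open>\<ge> m\<close>, so the lowest candidate coefficient of \<open>D y\<^sup>k\<close> is \<open>D\<^sub>r (x\<^sub>m)\<^sup>k\<close>\<close>
    define y where "y = x - fps_cutoff m x"
    have "fps_cutoff m x \<in> range coeffs_to_fls"
      using less by (auto simp: range_coeffs_to_fls_iff range_fps_to_fls_iff)
    then have "D * y ^ k \<in> range coeffs_to_fls" for k
    proof -
      have "D * y ^ k = (\<Sum>j\<le>k. of_nat (k choose j) * (D * x ^ j) * (- fps_cutoff m x) ^ (k - j))"
        unfolding y_def diff_conv_add_uminus binomial_ring by (simp add: sum_distrib_left ac_simps)
      also have "\<dots> \<in> range coeffs_to_fls"
        using \<open>fps_cutoff m x \<in> _\<close> Dx
        by (intro is_subring_sum[OF S] Dx is_subringD(4)[OF S] is_subring_of_nat[OF S]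
            is_subring_power[OF S] is_subringD(5)[OF S])
      finally show ?thesis .
    qed
    then have lead: "(D * y ^ k) $ (subdegree D + k * m) \<in> range fps_to_fls" for k
      unfolding range_coeffs_to_fls_iff by blast
    have y0: "\<And>i. i < m \<Longrightarrow> y $ i = 0" and ym: "y $ m = x $ m" by (simp_all add: y_def)
    have "(D * y ^ k) $ (subdegree D + k * m) = D $ subdegree D * (x $ m) ^ k" for k
      using fps_mult_power_nth_leading[of D m y k, OF D y0] unfolding ym .
    then have "D $ subdegree D * (x $ m) ^ k \<in> range fps_to_fls" for k
      using lead[of k] by simp
    moreover have "D $ subdegree D \<noteq> 0" using D by simp
    ultimately show ?case using range_fps_to_fls_if_powers[of "D $ subdegree D" "x $ m"] by blast
  qed
qed

lemma to_fract_power: "to_fract (x ^ n) = to_fract x ^ n"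
  by (induction n) simp_all

definition laurent_embed :: "'a::field fps fps \<Rightarrow> 'a fls fls" where
  "laurent_embed f = fps_to_fls (coeffs_to_fls f)"

lemma laurent_embed_mult [simp]: "laurent_embed (f * g) = laurent_embed f * laurent_embed g"
  by (simp add: laurent_embed_def fls_times_fps_to_fls)

lemma laurent_embed_0 [simp]: "laurent_embed 0 = 0" and laurent_embed_1 [simp]: "laurent_embed 1 = 1"
  by (simp_all add: laurent_embed_def)

lemma laurent_embed_power [simp]: "laurent_embed (f ^ n) = laurent_embed f ^ n"
  by (induction n) simp_all

lemma laurent_embed_eq_iff [simp]: "laurent_embed f = laurent_embed g \<longleftrightarrow> f = g"
  by (simp add: laurent_embed_def)

lemma laurent_embed_eq_0_iff [simp]: "laurent_embed f = 0 \<longleftrightarrow> f = 0"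
  by (metis laurent_embed_0 laurent_embed_eq_iff)

lemma range_laurent_embed_if_powers:
  fixes x :: "'a::field fls fls"
  assumes "d \<noteq> 0" and dx: "\<And>k. laurent_embed d * x ^ k \<in> range laurent_embed"
  shows "x \<in> range laurent_embed"
proof -
  have "laurent_embed d * x ^ k \<in> range fps_to_fls" for k
    using dx[of k] by (auto simp: laurent_embed_def)
  then obtain x' where x': "x = fps_to_fls x'"
    using range_fps_to_fls_if_powers[of "laurent_embed d" x] \<open>d \<noteq> 0\<close> by auto
  have "coeffs_to_fls d * x' ^ k \<in> range coeffs_to_fls" for k
  proof -
    obtain h where "laurent_embed d * x ^ k = laurent_embed h" using dx[of k] by auto
    then have "fps_to_fls (coeffs_to_fls d * x' ^ k) = fps_to_fls (coeffs_to_fls h)"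
      by (simp add: x' laurent_embed_def fls_times_fps_to_fls fps_to_fls_power)
    then have "coeffs_to_fls d * x' ^ k = coeffs_to_fls h" by simp
    then show ?thesis by (metis rangeI)
  qed
  moreover have "coeffs_to_fls d \<noteq> 0" using \<open>d \<noteq> 0\<close> coeffs_to_fls_eq_iff[of d 0] by simp
  ultimately have "x' \<in> range coeffs_to_fls" using range_coeffs_to_fls_if_powers by blast
  then show ?thesis by (auto simp: x' laurent_embed_def)
qed

lemma completely_integrally_closed_Tfr: "completely_integrally_closed (Tfr :: 'k::field Tring fract set)"
  unfolding completely_integrally_closed_def
proof (intro allI impI, elim conjE)
  fix d w :: "'k Tring fract"
  assume "d \<in> Tfr" "d \<noteq> 0" and dw: "\<forall>k. d * w ^ k \<in> Tfr"
  obtain f g where w: "w = to_fract f / to_fract g" "g \<noteq> 0"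
    by (cases w) (auto simp: Fract_conv_to_fract)
  obtain d0 where d0: "d = to_fract d0" "d0 \<noteq> 0" using \<open>d \<in> Tfr\<close> \<open>d \<noteq> 0\<close> by (auto simp: Tfr_def)
  define x where "x = laurent_embed f / laurent_embed g"
  have "laurent_embed d0 * x ^ k \<in> range laurent_embed" for k
  proof -
    obtain h where "d * w ^ k = to_fract h" using dw by (auto simp: Tfr_def)
    then have "to_fract (d0 * f ^ k) = to_fract (h * g ^ k)"
      using w d0 by (simp add: power_divide field_simps to_fract_power)
    then have "d0 * f ^ k = h * g ^ k" by (simp only: to_fract_eq_iff)
    then have "laurent_embed d0 * laurent_embed f ^ k = laurent_embed h * laurent_embed g ^ k"
      by (metis laurent_embed_mult laurent_embed_power)
    then have "laurent_embed d0 * x ^ k = laurent_embed h"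
      using w(2) by (simp add: x_def power_divide field_simps)
    then show ?thesis by (metis rangeI)
  qed
  then obtain t where "x = laurent_embed t" using range_laurent_embed_if_powers d0(2) by blast
  then have "laurent_embed f = laurent_embed (g * t)" using w(2) by (simp add: x_def field_simps)
  then have "f = g * t" by (simp only: laurent_embed_eq_iff)
  then have "w = to_fract t" using w by (simp add: field_simps)
  then show "w \<in> Tfr" by simp
qed

section \<open>The ideal \<open>(Y,Z)\<close>\<close>

lemma Y_Z_mem_ideal_gen:
  "to_fract Yvar \<in> ideal_gen Rfr {to_fract Yvar, to_fract (Zvar :: 'k::field Tring)}"
  "to_fract Zvar \<in> ideal_gen Rfr {to_fract Yvar, to_fract (Zvar :: 'k::field Tring)}"
  using subset_ideal_gen[OF is_subring_Rfr, of "{to_fract Yvar, to_fract (Zvar :: 'k Tring)}"] by auto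

lemma ideal_gen_Y_Z_subset_Mfr:
  "ideal_gen Rfr {to_fract Yvar, to_fract Zvar} \<subseteq> (Mfr :: 'k::field Tring fract set)"
  by (rule ideal_gen_subset[OF is_submodule_Mfr]) simp

lemma frac_inv_Rfr_eq_Tfr:
  fixes A :: "'k::field Tring fract set"
  assumes "A \<subseteq> Mfr" "to_fract Yvar \<in> A" "to_fract Zvar \<in> A"
  shows "frac_inv Rfr A = Tfr"
proof
  show "Tfr \<subseteq> frac_inv Rfr A"
    using assms(1) Mfr_mult_Tfr Mfr_subset_Rfr unfolding frac_inv_def by (fastforce simp: mult.commute)
  have "frac_inv Rfr A \<subseteq> frac_inv Tfr {to_fract Yvar, to_fract Zvar}"
    using assms(2,3) Rfr_subset_Tfr unfolding frac_inv_def by blast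
  then show "frac_inv Rfr A \<subseteq> Tfr" using frac_inv_Tfr_Y_Z by blast
qed

lemma fideal_prod_Y_Z_Tfr:
  "fideal_prod (ideal_gen Rfr {to_fract Yvar, to_fract Zvar}) Tfr = (Mfr :: 'k::field Tring fract set)"
proof
  show "fideal_prod (ideal_gen Rfr {to_fract Yvar, to_fract Zvar}) Tfr \<subseteq> (Mfr :: 'k Tring fract set)"
    using is_submodule_Mfr ideal_gen_Y_Z_subset_Mfr Mfr_mult_Tfr
    by (intro fideal_prod_subset) (auto simp: is_submodule_def)
  show "Mfr \<subseteq> fideal_prod (ideal_gen Rfr {to_fract Yvar, to_fract Zvar}) (Tfr :: 'k Tring fract set)"
  proof
    fix m :: "'k Tring fract" assume "m \<in> Mfr"
    then obtain f where f: "m = to_fract f" "const_term f = 0" by (auto simp: Mfr_def Mset_def)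
    obtain p q where "f = Yvar * p + Zvar * q" using Mset_decomp[OF f(2)] by blast
    then have "m = to_fract Yvar * to_fract p + to_fract Zvar * to_fract q" by (simp add: f(1))
    then show "m \<in> fideal_prod (ideal_gen Rfr {to_fract Yvar, to_fract Zvar}) Tfr"
      by (simp only:) (intro fideal_prod_add_mem Y_Z_mem_ideal_gen to_fract_in_Tfr)
  qed
qed

lemma v_closure_Y_Z_mult_inverse:
  "v_closure Rfr (fideal_prod (ideal_gen Rfr {to_fract Yvar, to_fract Zvar})
      (frac_inv Rfr (ideal_gen Rfr {to_fract Yvar, to_fract Zvar}))) = (Mfr :: 'k::field Tring fract set)"
proof -
  have "frac_inv Rfr (ideal_gen Rfr {to_fract Yvar, to_fract (Zvar :: 'k Tring)}) = Tfr"
    using ideal_gen_Y_Z_subset_Mfr Y_Z_mem_ideal_gen by (rule frac_inv_Rfr_eq_Tfr)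
  moreover have "frac_inv Rfr (Mfr :: 'k Tring fract set) = Tfr"
    by (rule frac_inv_Rfr_eq_Tfr) simp_all
  ultimately show ?thesis by (simp add: fideal_prod_Y_Z_Tfr v_closure_def frac_inv_Rfr_Tfr)
qed

lemma Mfr_ne_Rfr: "Mfr \<noteq> (Rfr :: 'k::field Tring fract set)"
  using is_subringD(2)[OF is_subring_Rfr] to_fract_in_Mfr_iff[of "1 :: 'k Tring"] by auto

lemma not_v_domain_Rfr: "\<not> v_domain (Rfr :: 'k::field Tring fract set)"
proof
  define YZ where "YZ = ideal_gen Rfr {to_fract Yvar, to_fract (Zvar :: 'k Tring)}"
  assume "v_domain (Rfr :: 'k Tring fract set)"
  moreover have "is_ideal Rfr YZ"
    unfolding YZ_def is_ideal_iff_submodule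
    by (intro conjI order_trans[OF ideal_gen_Y_Z_subset_Mfr Mfr_subset_Rfr]
        is_submodule_ideal_gen is_subring_Rfr)
  moreover have "fin_gen_ideal Rfr YZ" unfolding fin_gen_ideal_def YZ_def
    by (intro exI[of _ "{to_fract Yvar, to_fract Zvar}"]) simp
  moreover have "YZ \<noteq> {0}"
  proof -
    have "to_fract Yvar \<in> YZ" using Y_Z_mem_ideal_gen(1) unfolding YZ_def .
    then show ?thesis by auto
  qed
  ultimately have "v_closure Rfr (fideal_prod YZ (frac_inv Rfr YZ)) = Rfr"
    unfolding v_domain_def by blast
  then show False
    using v_closure_Y_Z_mult_inverse[where 'k = 'k] Mfr_ne_Rfr[where 'k = 'k] unfolding YZ_def by simp
qed

theorem v_basic_Rfr:
  fixes I :: "'k::field Tring fract set"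
  assumes I: "is_ideal Rfr I" "fin_gen_ideal Rfr I" "I \<noteq> {0}"
  shows "v_basic Rfr I"
proof (cases "\<exists>c. I = (*) c ` Rfr")
  case True
  then obtain c where c: "I = (*) c ` Rfr" by blast
  have "c \<noteq> 0"
  proof
    assume "c = 0"
    then have "I = {0}" using c is_subringD(1)[OF is_subring_Rfr] by auto
    with I(3) show False by simp
  qed
  then show ?thesis unfolding c by (rule v_basic_principal[OF is_subring_Rfr])
next
  case False
  obtain S where "finite S" "I = ideal_gen Rfr S" using I(2) unfolding fin_gen_ideal_def by blast
  then have "frac_inv Tfr I \<subseteq> frac_inv Rfr I" using False by (intro frac_inv_Tfr_subset_Rfr)
  moreover have "{to_fract Yvar, to_fract Zvar} \<subseteq> frac_inv Rfr (Tfr :: 'k Tring fract set)"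
    by (simp add: frac_inv_Rfr_Tfr)
  ultimately show ?thesis
    using v_basic_if_frac_inv_overring[OF is_subring_Rfr is_subring_Tfr Rfr_subset_Tfr
        completely_integrally_closed_Tfr _ frac_inv_Tfr_Y_Z I(1,3)] by blast
qed

theorem mainTheorem12:
  fixes k_type :: "'k::field itself"
  defines "R \<equiv> (Rfr :: 'k Tring fract set)"
  defines "YZ \<equiv> ideal_gen R {to_fract (Yvar :: 'k Tring), to_fract Zvar}"
  shows "(\<forall>I. is_ideal R I \<and> fin_gen_ideal R I \<and> I \<noteq> {0} \<longrightarrow> v_basic R I)
         \<and> \<not> v_domain R
         \<and> v_closure R (fideal_prod YZ (frac_inv R YZ)) = Mfr
         \<and> (Mfr :: 'k Tring fract set) \<noteq> R"
  unfolding R_def YZ_def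
  using v_basic_Rfr not_v_domain_Rfr v_closure_Y_Z_mult_inverse Mfr_ne_Rfr by blast

end
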